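(* Assume $S\times M\neq\emptyset$, let $(x,\lambda):[t_0,+\infty[\ \to X\times Y$ be a solution of (AHT), and suppose that $\varepsilon\notin\mathcal{L}^1([t_0,+\infty[)$ and that either $\dot\varepsilon\in\mathcal{L}^1([t_0,+\infty[)$ or $|\dot\varepsilon|^2/\varepsilon\in\mathcal{L}^1([t_0,+\infty[)$. Then for every $(\bar x,\bar\lambda)\in S\times M$, \[ \lim_{t\to+\infty}\big(L(x(t),\bar\lambda)-L(\bar x,\lambda(t))\big)=0\quad\text{and}\quad\lim_{t\to+\infty}\|(\dot x(t),\dot\lambda(t))\|=0. \]
   Context: $X,Y$ are real Hilbert spaces; $X\times Y$ carries the product inner product and norm $\|\cdot\|$. Standing assumptions: $f:X\to\mathbb{R}$ is convex and continuously differentiable with $\nabla f$ Lipschitz continuous on bounded subsets of $X$; $A:X\to Y$ is linear and continuous with adjoint $A^*$; $b\in Y$; $\varepsilon:[t_0,+\infty[\ \to\ ]0,+\infty[$ ($t_0\ge0$) is continuously differentiable with $\lim_{t\to+\infty}\varepsilon(t)=0$. $L(x,\lambda)=f(x)+\langle\lambda,Ax-b\rangle_Y$. $S$ is the set of optimal solutions of $\min\{f(x):Ax=b\}$, $M$ the set of Lagrange multipliers; $S\times M$ is the set of saddle points of $L$. (AHT) is the system $\dot x+\nabla f(x)+A^*\lambda+\varepsilon(t)x=0$, $\dot\lambda+b-Ax+\varepsilon(t)\lambda=0$; a solution is a continuously differentiable $(x,\lambda):[t_0,+\infty[\ \to X\times Y$ satisfying it on $[t_0,+\infty[$ (existence and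 uniqueness for every initial datum is assumed). *)

theory Defs
  imports "HOL-Analysis.Analysis"
begin

definition lagr :: "('a::real_inner \<Rightarrow> real) \<Rightarrow> ('a \<Rightarrow> 'b::real_inner) \<Rightarrow> 'b \<Rightarrow> 'a \<Rightarrow> 'b \<Rightarrow> real" where
  "lagr f A b x l = f x + inner l (A x - b)"

definition opt_sol :: "('a::real_inner \<Rightarrow> real) \<Rightarrow> ('a \<Rightarrow> 'b::real_inner) \<Rightarrow> 'b \<Rightarrow> 'a set" where
  "opt_sol f A b = {xb. A xb = b \<and> (\<forall>x. A x = b \<longrightarrow> f xb \<le> f x)}"

definition lag_mult :: "('a::real_inner \<Rightarrow> real) \<Rightarrow> ('a \<Rightarrow> 'a) \<Rightarrow> ('a \<Rightarrow> 'b::real_inner)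
    \<Rightarrow> ('b \<Rightarrow> 'a) \<Rightarrow> 'b \<Rightarrow> 'b set" where
  "lag_mult f gf A As b = {l. \<forall>xb \<in> opt_sol f A b. gf xb + As l = 0}"

end

theory Submission
  imports Defs
begin

(* Write z = (x, lambda). Then (AHT) reads z' = -(T z + eps z) for the saddle operator
   T (x, lambda) = (grad f x + A* lambda, b - A x), which is monotone and vanishes exactly at the
   saddle points. Monotonicity bounds the trajectory: |z - zb|^2 decreases as long as
   |z - zb| >= |zb|. Comparing the flow at times r and r + h and letting h -> 0 gives
     |z'(t)|^2 - |z'(s)|^2 <= int_s^t (-2 eps |z'|^2 + 2 C |eps'| |z'|),
   and each of the two integrability hypotheses on eps' turns the last term into eps |z'|^2 plus
   an integrable function; since eps is not integrable, |z'| -> 0. Finally the Lagrangian gap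
   lies between 0 and <T z, z - zb>, and T z = -(z' + eps z) -> 0. *)

section \<open>Real functions on a half-line\<close>

lemma last_crossing:
  fixes \<phi> :: "real \<Rightarrow> real"
  assumes "a \<le> t" and cont: "continuous_on {a..t} \<phi>" and "\<phi> a \<le> R" and "R < \<phi> t"
  obtains s where "a \<le> s" "s < t" "\<phi> s = R" "\<And>r. r \<in> {s..t} \<Longrightarrow> R \<le> \<phi> r"
proof -
  let ?S = "{r \<in> {a..t}. \<phi> r \<le> R}"
  define s where "s = Sup ?S"
  have bdd: "bdd_above ?S" by (rule bdd_aboveI[of _ t]) auto
  have "s \<in> ?S"
    unfolding s_def
    by (rule closed_contains_Sup[OF _ bdd])
      (use assms continuous_on_closed_Collect_le[OF cont continuous_on_const] in auto)
  then have s: "a \<le> s" "s < t" "\<phi> s \<le> R"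
    using assms by (auto simp: order.order_iff_strict)
  have above: "R < \<phi> r" if "r \<in> {s<..t}" for r
    using cSup_upper[OF _ bdd, of r] that s unfolding s_def[symmetric] by force
  have "\<phi> s = R"
  proof (rule ccontr)
    assume "\<phi> s \<noteq> R"
    moreover have "continuous_on {s..t} \<phi>" by (rule continuous_on_subset[OF cont]) (use s in auto)
    ultimately obtain r where "s \<le> r" "r \<le> t" "\<phi> r = R"
      using IVT'[of \<phi> s R t] s assms by auto
    with above[of r] \<open>\<phi> s \<noteq> R\<close> show False by (cases "r = s") auto
  qed
  moreover have "R \<le> \<phi> r" if "r \<in> {s..t}" for r
    using above[of r] that \<open>\<phi> s = R\<close> by (cases "r = s") auto
  ultimately show thesis using s that by blast
qed

lemma le_max_if_derivative_nonpos_above: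
  fixes h h' :: "real \<Rightarrow> real"
  assumes deriv: "\<And>t. a \<le> t \<Longrightarrow> (h has_real_derivative h' t) (at t within {a..})"
    and nonpos: "\<And>t. a \<le> t \<Longrightarrow> R \<le> h t \<Longrightarrow> h' t \<le> 0"
    and "a \<le> t"
  shows "h t \<le> max (h a) R"
proof (rule ccontr)
  assume "\<not> ?thesis"
  then have "max (h a) R < h t" by (simp only: not_le)
  moreover have "continuous_on {a..t} h"
    by (rule DERIV_continuous_on, rule has_field_derivative_subset[OF deriv]) auto
  ultimately obtain s where s: "a \<le> s" "s < t" "h s = max (h a) R"
    and above: "\<And>r. r \<in> {s..t} \<Longrightarrow> max (h a) R \<le> h r"
    using last_crossing[of a t h "max (h a) R"] \<open>a \<le> t\<close> by (metis max.cobounded1)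
  have "(h has_derivative (\<lambda>d. h' r * d)) (at r within {s..t})" if "s \<le> r" for r
    using deriv[of r] that s unfolding has_field_derivative_def
    by (auto intro: has_derivative_subset)
  then obtain r where "r \<in> {s..t}" "h t - h s = h' r * (t - s)"
    using mvt_very_simple[of s t h "\<lambda>r d. h' r * d"] s by auto
  moreover have "h' r \<le> 0"
    using nonpos[of r] above[of r] \<open>r \<in> {s..t}\<close> s by auto
  ultimately have "h t \<le> h s"
    using s mult_nonpos_nonneg[of "h' r" "t - s"] by linarith
  with s \<open>\<not> ?thesis\<close> show False by simp
qed

definition diff_quot :: "(real \<Rightarrow> 'a::real_normed_vector) \<Rightarrow> real \<Rightarrow> real \<Rightarrow> 'a" where
  "diff_quot z k r = (z (r + k) - z r) /\<^sub>R k"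

lemma uniform_limit_difference_quotient:
  fixes z :: "real \<Rightarrow> 'c::real_normed_vector"
  assumes deriv: "\<And>r. a \<le> r \<Longrightarrow> (z has_vector_derivative z' r) (at r within {a..})"
    and cont: "continuous_on {a..} z'"
    and h: "filterlim h (at_right 0) F"
  shows "uniform_limit {a..b} (\<lambda>n. diff_quot z (h n)) z' F"
  unfolding diff_quot_def
proof (rule uniform_limitI)
  fix \<epsilon> :: real assume "0 < \<epsilon>"
  have "uniformly_continuous_on {a..b+1} z'"
    by (rule compact_uniformly_continuous[OF continuous_on_subset[OF cont]]) auto
  then obtain \<delta> where "0 < \<delta>"
    and \<delta>: "\<And>r r'. r \<in> {a..b+1} \<Longrightarrow> r' \<in> {a..b+1} \<Longrightarrow> dist r' r < \<delta> \<Longrightarrow> dist (z' r') (z' r) < \<epsilon>/2"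
    using \<open>0 < \<epsilon>\<close> unfolding uniformly_continuous_on_def by (metis half_gt_zero)
  have "eventually (\<lambda>y. y \<in> {0<..<min \<delta> 1}) (at_right (0::real))"
    using \<open>0 < \<delta>\<close> by (auto simp: eventually_at_right_field intro!: exI[of _ "min \<delta> 1"])
  then have "\<forall>\<^sub>F n in F. h n \<in> {0<..<min \<delta> 1}"
    using h unfolding filterlim_iff by blast
  then show "\<forall>\<^sub>F n in F. \<forall>r\<in>{a..b}. dist ((z (r + h n) - z r) /\<^sub>R h n) (z' r) < \<epsilon>"
  proof eventually_elim
    case (elim n)
    show ?case
    proof
      fix r assume r: "r \<in> {a..b}"
      have "norm (z (r + h n) - z r - (r + h n - r) *\<^sub>R z' r) \<le> norm (r + h n - r) * (\<epsilon>/2)"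
      proof (rule vector_differentiable_bound_linearization[where S="{r..r + h n}" and ?x0.0=r])
        fix r' assume r': "r' \<in> {r..r + h n}"
        show "(z has_vector_derivative z' r') (at r' within {r..r + h n})"
          by (rule has_vector_derivative_within_subset[OF deriv]) (use r r' in auto)
        show "norm (z' r' - z' r) \<le> \<epsilon>/2"
          using \<delta>[of r r'] r r' elim by (auto simp: dist_norm dist_real_def)
      qed (use elim in \<open>auto simp: closed_segment_eq_real_ivl\<close>)
      then have "norm (z (r + h n) - z r - h n *\<^sub>R z' r) \<le> h n * (\<epsilon>/2)"
        using elim by simp
      then have "norm ((z (r + h n) - z r - h n *\<^sub>R z' r) /\<^sub>R h n) \<le> \<epsilon>/2"
        using elim by (simp add: divide_simps mult.commute)
      moreover have "(z (r + h n) - z r) /\<^sub>R h n - z' r = (z (r + h n) - z r - h n *\<^sub>R z' r) /\<^sub>R h n"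
        using elim by (simp add: algebra_simps)
      ultimately show "dist ((z (r + h n) - z r) /\<^sub>R h n) (z' r) < \<epsilon>"
        using \<open>0 < \<epsilon>\<close> by (simp only: dist_norm)
    qed
  qed
qed

lemma has_vector_derivative_inner_self:
  fixes w :: "real \<Rightarrow> 'c::real_inner"
  assumes "(w has_vector_derivative w') (at t within S)"
  shows "((\<lambda>r. inner (w r) (w r)) has_vector_derivative 2 * inner w' (w t)) (at t within S)"
proof -
  have "((\<lambda>r. inner (w r) (w r)) has_derivative
      (\<lambda>h. inner (w t) (h *\<^sub>R w') + inner (h *\<^sub>R w') (w t))) (at t within S)"
    using assms unfolding has_vector_derivative_def by (intro has_derivative_inner)
  moreover have "(\<lambda>h. inner (w t) (h *\<^sub>R w') + inner (h *\<^sub>R w') (w t)) = (\<lambda>h. h *\<^sub>R (2 * inner w' (w t)))"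
    by (auto simp: inner_commute algebra_simps)
  ultimately show ?thesis unfolding has_vector_derivative_def by simp
qed

lemma has_vector_derivative_forward_difference:
  fixes z :: "real \<Rightarrow> 'c::real_normed_vector"
  assumes deriv: "\<And>r. a \<le> r \<Longrightarrow> (z has_vector_derivative z' r) (at r within {a..})"
    and "a \<le> s" "0 \<le> k" "r \<in> {s..t}"
  shows "((\<lambda>r. z (r + k) - z r) has_vector_derivative z' (r + k) - z' r) (at r within {s..t})"
proof -
  have "((\<lambda>r. r + k) has_vector_derivative 1) (at r within {s..t})"
    by (auto intro!: derivative_eq_intros)
  moreover have "(z has_vector_derivative z' (r + k)) (at (r + k) within (\<lambda>r. r + k) ` {s..t})"
    by (rule has_vector_derivative_within_subset[OF deriv]) (use assms in auto)
  ultimately have "((z \<circ> (\<lambda>r. r + k)) has_vector_derivative 1 *\<^sub>R z' (r + k)) (at r within {s..t})"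
    by (rule vector_diff_chain_within)
  then have "((\<lambda>r. z (r + k)) has_vector_derivative z' (r + k)) (at r within {s..t})"
    by (simp add: o_def)
  moreover have "(z has_vector_derivative z' r) (at r within {s..t})"
    by (rule has_vector_derivative_within_subset[OF deriv]) (use assms in auto)
  ultimately show ?thesis by (rule has_vector_derivative_diff)
qed

lemma continuous_on_diff_quot:
  assumes "continuous_on {a..} z" "0 \<le> k" "a \<le> s"
  shows "continuous_on {s..t} (diff_quot z k)"
  unfolding diff_quot_def
  by (intro continuous_intros continuous_on_compose2[OF assms(1)] continuous_on_subset[OF assms(1)])
    (use assms in auto)

text \<open>The velocity z' is only continuous, so the energy estimate is first proved for the
  difference quotients of z, whose squared norm can be differentiated, and then passed to the
  limit.\<close>

lemma diff_quot_energy_le: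
  fixes z :: "real \<Rightarrow> 'c::real_inner" and e :: "real \<Rightarrow> real"
  assumes z_deriv: "\<And>r. a \<le> r \<Longrightarrow> (z has_vector_derivative z' r) (at r within {a..})"
    and e_cont: "continuous_on {a..} e"
    and one_sided_bound: "\<And>r u. a \<le> r \<Longrightarrow> a \<le> u \<Longrightarrow> inner (z' u - z' r) (z u - z r)
      \<le> - e r * norm (z u - z r)^2 + C * \<bar>e u - e r\<bar> * norm (z u - z r)"
    and "a \<le> s" "s \<le> t" "0 < k"
  shows "norm (diff_quot z k t)^2 - norm (diff_quot z k s)^2
    \<le> integral {s..t} (\<lambda>r. -2 * e r * norm (diff_quot z k r)^2
                            + 2 * C * \<bar>diff_quot e k r\<bar> * norm (diff_quot z k r))"
    (is "_ \<le> integral _ ?F")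
proof -
  define w where "w r = z (r + k) - z r" for r
  have z_cont: "continuous_on {a..} z"
    using z_deriv by (intro continuous_on_vector_derivative) auto
  have norm_quot: "norm (diff_quot z k r) = norm (w r) / k" for r
    using \<open>0 < k\<close> by (simp add: diff_quot_def w_def divide_inverse_commute)
  have abs_quot: "\<bar>diff_quot e k r\<bar> = \<bar>e (r + k) - e r\<bar> / k" for r
    using \<open>0 < k\<close> by (simp add: diff_quot_def abs_mult divide_inverse_commute)
  have "((\<lambda>r. 2 * inner (z' (r + k) - z' r) (w r)) has_integral
      norm (w t)^2 - norm (w s)^2) {s..t}"
    unfolding w_def power2_norm_eq_inner using assms
    by (intro fundamental_theorem_of_calculus has_vector_derivative_inner_self
        has_vector_derivative_forward_difference[OF z_deriv]) auto
  moreover have "((\<lambda>r. k^2 * ?F r) has_integral k^2 * integral {s..t} ?F) {s..t}"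
    using assms z_cont e_cont
    by (intro has_integral_mult_right integrable_integral integrable_continuous_interval
        continuous_intros continuous_on_diff_quot) (auto intro: continuous_on_subset[OF e_cont])
  moreover have "2 * inner (z' (r + k) - z' r) (w r) \<le> k^2 * ?F r" if "r \<in> {s..t}" for r
  proof -
    have "2 * inner (z' (r + k) - z' r) (w r) \<le> 2 * (- e r * norm (w r)^2 + C * \<bar>e (r + k) - e r\<bar> * norm (w r))"
      unfolding w_def using one_sided_bound[of r "r + k"] that \<open>a \<le> s\<close> \<open>0 < k\<close> by simp
    also have "\<dots> = k^2 * ?F r"
      unfolding norm_quot abs_quot using \<open>0 < k\<close> by (simp add: field_simps power2_eq_square)
    finally show ?thesis .
  qed
  ultimately have "norm (w t)^2 - norm (w s)^2 \<le> k^2 * integral {s..t} ?F"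
    by (rule has_integral_le)
  then have "(norm (w t)^2 - norm (w s)^2) / k^2 \<le> integral {s..t} ?F"
    using \<open>0 < k\<close> by (simp add: pos_divide_le_eq mult.commute del: times_divide_eq_left)
  then show ?thesis
    by (simp add: norm_quot power_divide diff_divide_distrib)
qed

lemma tendsto_integral_diff_quot_energy:
  fixes z :: "real \<Rightarrow> 'c::real_inner" and e :: "real \<Rightarrow> real"
  assumes z_deriv: "\<And>r. a \<le> r \<Longrightarrow> (z has_vector_derivative z' r) (at r within {a..})"
    and z'_cont: "continuous_on {a..} z'"
    and e_deriv: "\<And>r. a \<le> r \<Longrightarrow> (e has_vector_derivative e' r) (at r within {a..})"
    and e'_cont: "continuous_on {a..} e'"
    and k: "filterlim k (at_right 0) sequentially" "\<And>n. 0 \<le> k n"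
    and "a \<le> s"
  shows "(\<lambda>n. integral {s..t} (\<lambda>r. -2 * e r * norm (diff_quot z (k n) r)^2
                                  + 2 * C * \<bar>diff_quot e (k n) r\<bar> * norm (diff_quot z (k n) r)))
    \<longlonglongrightarrow> integral {s..t} (\<lambda>r. -2 * e r * norm (z' r)^2 + 2 * C * \<bar>e' r\<bar> * norm (z' r))"
proof -
  have z_cont: "continuous_on {a..} z" and e_cont: "continuous_on {a..} e"
    using z_deriv e_deriv by (auto intro: continuous_on_vector_derivative)
  have sub: "{s..t} \<subseteq> {a..t}"
    using \<open>a \<le> s\<close> by auto
  have uz: "uniform_limit {s..t} (\<lambda>n. diff_quot z (k n)) z' sequentially"
    by (rule uniform_limit_on_subset[OF uniform_limit_difference_quotient[OF z_deriv z'_cont k(1)] sub])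
  have ue: "uniform_limit {s..t} (\<lambda>n. diff_quot e (k n)) e' sequentially"
    by (rule uniform_limit_on_subset[OF uniform_limit_difference_quotient[OF e_deriv e'_cont k(1)] sub])
  have bdd: "bounded (g ` {s..t})" if "continuous_on {a..} g" for g :: "real \<Rightarrow> real"
    using \<open>a \<le> s\<close>
    by (intro compact_imp_bounded compact_continuous_image continuous_on_subset[OF that]) auto
  have "uniform_limit {s..t}
      (\<lambda>n r. -2 * e r * norm (diff_quot z (k n) r)^2
              + 2 * C * \<bar>diff_quot e (k n) r\<bar> * norm (diff_quot z (k n) r))
      (\<lambda>r. -2 * e r * norm (z' r)^2 + 2 * C * \<bar>e' r\<bar> * norm (z' r)) sequentially"
    (is "uniform_limit _ ?f ?g _")
    unfolding power2_eq_square real_norm_def[symmetric]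
    by (intro uniform_limit_intros uz ue bdd continuous_intros e_cont z'_cont e'_cont)
  moreover have "continuous_on {s..t} (?f n)" for n
    using \<open>a \<le> s\<close> k(2)
    by (intro continuous_intros continuous_on_diff_quot z_cont e_cont continuous_on_subset[OF e_cont])
      (auto intro: z_cont)
  ultimately obtain I J where I: "\<And>n. (?f n has_integral I n) {s..t}"
    and J: "(?g has_integral J) {s..t}" and "I \<longlonglongrightarrow> J"
    by (rule uniform_limit_integral) auto
  then show ?thesis
    using integral_unique[OF I] integral_unique[OF J] by simp
qed

lemma derivative_energy_le:
  fixes z :: "real \<Rightarrow> 'c::real_inner" and e :: "real \<Rightarrow> real"
  assumes z_deriv: "\<And>r. a \<le> r \<Longrightarrow> (z has_vector_derivative z' r) (at r within {a..})"
    and z'_cont: "continuous_on {a..} z'"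
    and e_deriv: "\<And>r. a \<le> r \<Longrightarrow> (e has_real_derivative e' r) (at r within {a..})"
    and e'_cont: "continuous_on {a..} e'"
    and one_sided_bound: "\<And>r u. a \<le> r \<Longrightarrow> a \<le> u \<Longrightarrow> inner (z' u - z' r) (z u - z r)
      \<le> - e r * norm (z u - z r)^2 + C * \<bar>e u - e r\<bar> * norm (z u - z r)"
    and "a \<le> s" "s \<le> t"
  shows "norm (z' t)^2 - norm (z' s)^2
    \<le> integral {s..t} (\<lambda>r. -2 * e r * norm (z' r)^2 + 2 * C * \<bar>e' r\<bar> * norm (z' r))"
proof -
  define k where "k n = inverse (real n)" for n :: nat
  have e_vderiv: "\<And>r. a \<le> r \<Longrightarrow> (e has_vector_derivative e' r) (at r within {a..})"
    using e_deriv by (simp add: has_real_derivative_iff_has_vector_derivative)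
  have k: "filterlim k (at_right 0) sequentially"
    unfolding k_def by (rule filterlim_compose[OF filterlim_inverse_at_right_top filterlim_real_sequentially])
  have e_cont: "continuous_on {a..} e"
    by (rule DERIV_continuous_on[OF e_deriv]) simp
  have "(\<lambda>n. norm (diff_quot z (k n) t)^2 - norm (diff_quot z (k n) s)^2)
      \<longlonglongrightarrow> norm (z' t)^2 - norm (z' s)^2"
    using \<open>a \<le> s\<close> \<open>s \<le> t\<close>
    by (intro tendsto_intros tendsto_uniform_limitI[OF uniform_limit_difference_quotient[OF z_deriv z'_cont k]])
      auto
  moreover have "(\<lambda>n. integral {s..t} (\<lambda>r. -2 * e r * norm (diff_quot z (k n) r)^2
                                  + 2 * C * \<bar>diff_quot e (k n) r\<bar> * norm (diff_quot z (k n) r)))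
    \<longlonglongrightarrow> integral {s..t} (\<lambda>r. -2 * e r * norm (z' r)^2 + 2 * C * \<bar>e' r\<bar> * norm (z' r))"
    using \<open>a \<le> s\<close>
    by (intro tendsto_integral_diff_quot_energy[OF z_deriv z'_cont e_vderiv e'_cont k]) (auto simp: k_def)
  moreover have "\<exists>N. \<forall>n\<ge>N. norm (diff_quot z (k n) t)^2 - norm (diff_quot z (k n) s)^2
      \<le> integral {s..t} (\<lambda>r. -2 * e r * norm (diff_quot z (k n) r)^2
                                + 2 * C * \<bar>diff_quot e (k n) r\<bar> * norm (diff_quot z (k n) r))"
    using diff_quot_energy_le[OF z_deriv e_cont one_sided_bound \<open>a \<le> s\<close> \<open>s \<le> t\<close>]
    by (auto simp: k_def intro!: exI[of _ 1])
  ultimately show ?thesis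
    by (rule LIMSEQ_le)
qed

lemma set_integrable_atLeast_if_integral_bounded:
  fixes e :: "real \<Rightarrow> real"
  assumes cont: "continuous_on {a..} e" and nonneg: "\<And>t. a \<le> t \<Longrightarrow> 0 \<le> e t"
    and bounded: "\<And>t. a \<le> t \<Longrightarrow> integral {a..t} e \<le> B"
  shows "set_integrable lborel {a..} e"
proof -
  define A where "A i = {a..a + real i}" for i :: nat
  have int: "set_integrable lborel (A i) e" for i
    unfolding A_def by (rule borel_integrable_atLeastAtMost'[OF continuous_on_subset[OF cont]]) auto
  have "incseq (\<lambda>i. integral (A i) e)"
    unfolding A_def
    by (intro incseq_SucI integral_subset_le)
      (auto intro!: integrable_continuous_interval continuous_on_subset[OF cont] nonneg)
  moreover have "\<forall>i. integral (A i) e \<le> B"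
    unfolding A_def using bounded by simp
  ultimately obtain L where "(\<lambda>i. integral (A i) e) \<longlonglongrightarrow> L"
    by (rule incseq_convergent)
  then have "(\<lambda>i. LINT x:A i|lborel. e x) \<longlonglongrightarrow> L"
    by (simp add: set_borel_integral_eq_integral(2)[OF int])
  then have "set_integrable lborel (\<Union>i. A i) e"
    by (intro pos_integrable_to_top[where l=L] int) (auto simp: A_def mono_def nonneg)
  moreover have "(\<Union>i. A i) = {a..}"
    by (auto simp: A_def) (metis add.commute diff_le_eq real_arch_simple)
  ultimately show ?thesis by simp
qed

lemma set_integrable_atLeast_tail:
  fixes \<rho> :: "real \<Rightarrow> real"
  assumes int: "set_integrable lborel {a..} \<rho>" and "0 < \<epsilon>"
  obtains T where "a \<le> T" "\<And>s t. T \<le> s \<Longrightarrow> s \<le> t \<Longrightarrow> \<bar>integral {s..t} \<rho>\<bar> < \<epsilon>"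
proof -
  have int_Icc: "set_integrable lborel {a..t} \<rho>" for t
    by (rule set_integrable_subset[OF int]) auto
  have "((\<lambda>t. integral {a..t} \<rho>) \<longlongrightarrow> (LINT x:{a..}|lborel. \<rho> x)) at_top"
    using tendsto_set_lebesgue_integral_at_top[OF _ int]
    by (simp add: set_borel_integral_eq_integral(2)[OF int_Icc])
  then have "\<forall>\<^sub>F t in at_top. dist (integral {a..t} \<rho>) (LINT x:{a..}|lborel. \<rho> x) < \<epsilon>/2"
    using \<open>0 < \<epsilon>\<close> by (intro tendstoD) auto
  then obtain T where T: "\<And>t. T \<le> t \<Longrightarrow> dist (integral {a..t} \<rho>) (LINT x:{a..}|lborel. \<rho> x) < \<epsilon>/2"
    unfolding eventually_at_top_linorder by blast
  show thesis
  proof (rule that[of "max a T"])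
    fix s t assume st: "max a T \<le> s" "s \<le> t"
    have "integral {a..s} \<rho> + integral {s..t} \<rho> = integral {a..t} \<rho>"
      using st set_borel_integral_eq_integral(1)[OF int_Icc]
      by (intro Henstock_Kurzweil_Integration.integral_combine) auto
    moreover have "dist (integral {a..s} \<rho>) (LINT x:{a..}|lborel. \<rho> x) < \<epsilon>/2"
      "dist (integral {a..t} \<rho>) (LINT x:{a..}|lborel. \<rho> x) < \<epsilon>/2"
      using T st by auto
    ultimately show "\<bar>integral {s..t} \<rho>\<bar> < \<epsilon>"
      unfolding dist_real_def by linarith
  qed simp
qed

lemma set_integrable_if_dissipative_bounded_below:
  fixes G e \<rho> :: "real \<Rightarrow> real"
  assumes G_nonneg: "\<And>t. a \<le> t \<Longrightarrow> 0 \<le> G t" and e_nonneg: "\<And>t. a \<le> t \<Longrightarrow> 0 \<le> e t"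
    and G_cont: "continuous_on {a..} G" and e_cont: "continuous_on {a..} e"
    and dissipation: "\<And>s t. a \<le> s \<Longrightarrow> s \<le> t \<Longrightarrow>
      G t \<le> G s - integral {s..t} (\<lambda>r. e r * G r) + integral {s..t} \<rho>"
    and "a \<le> T" and "0 < c" and above: "\<And>r. T \<le> r \<Longrightarrow> c \<le> G r"
    and \<rho>_bounded: "\<And>t. T \<le> t \<Longrightarrow> integral {T..t} \<rho> \<le> B"
  shows "set_integrable lborel {a..} e"
proof -
  have "integral {T..t} e \<le> (G T + B) / c" if "T \<le> t" for t
  proof -
    have "c * integral {T..t} e = integral {T..t} (\<lambda>r. c * e r)"
      by simp
    also have "\<dots> \<le> integral {T..t} (\<lambda>r. e r * G r)"
    proof (rule integral_le)
      show "(\<lambda>r. c * e r) integrable_on {T..t}" "(\<lambda>r. e r * G r) integrable_on {T..t}"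
        using \<open>a \<le> T\<close>
        by (intro integrable_continuous_interval continuous_intros continuous_on_subset[OF e_cont]
            continuous_on_subset[OF G_cont]; auto)+
      fix r assume "r \<in> {T..t}"
      then have "c * e r \<le> G r * e r"
        using above[of r] e_nonneg[of r] \<open>a \<le> T\<close> by (intro mult_right_mono) auto
      then show "c * e r \<le> e r * G r"
        by (metis mult.commute)
    qed
    also have "\<dots> \<le> G T + B"
      using dissipation[of T t] \<rho>_bounded[OF that] G_nonneg[of t] \<open>a \<le> T\<close> that by auto
    finally show ?thesis
      using \<open>0 < c\<close> by (simp add: field_simps)
  qed
  then have "set_integrable lborel {T..} e"
    using \<open>a \<le> T\<close> e_nonneg
    by (intro set_integrable_atLeast_if_integral_bounded continuous_on_subset[OF e_cont]) auto
  moreover have "set_integrable lborel {a..T} e"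
    by (rule borel_integrable_atLeastAtMost'[OF continuous_on_subset[OF e_cont]]) auto
  ultimately have "set_integrable lborel ({a..T} \<union> {T..}) e"
    by (intro set_integrable_Un) auto
  moreover have "{a..T} \<union> {T..} = {a..}"
    using \<open>a \<le> T\<close> by auto
  ultimately show ?thesis
    by simp
qed

lemma tendsto_zero_if_dissipative:
  fixes G e \<rho> :: "real \<Rightarrow> real"
  assumes G_nonneg: "\<And>t. a \<le> t \<Longrightarrow> 0 \<le> G t" and e_nonneg: "\<And>t. a \<le> t \<Longrightarrow> 0 \<le> e t"
    and G_cont: "continuous_on {a..} G" and e_cont: "continuous_on {a..} e"
    and e_not_int: "\<not> set_integrable lborel {a..} e"
    and \<rho>_int: "set_integrable lborel {a..} \<rho>"
    and dissipation: "\<And>s t. a \<le> s \<Longrightarrow> s \<le> t \<Longrightarrow>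
      G t \<le> G s - integral {s..t} (\<lambda>r. e r * G r) + integral {s..t} \<rho>"
  shows "(G \<longlongrightarrow> 0) at_top"
proof (rule tendstoI)
  fix \<delta> :: real assume "0 < \<delta>"
  then obtain T where "a \<le> T"
    and tail: "\<And>s t. T \<le> s \<Longrightarrow> s \<le> t \<Longrightarrow> \<bar>integral {s..t} \<rho>\<bar> < \<delta>/2"
    using set_integrable_atLeast_tail[OF \<rho>_int, of "\<delta>/2"] by auto
  have \<rho>_le: "integral {T..t} \<rho> \<le> \<delta>/2" if "T \<le> t" for t
    using tail[OF order_refl that] by (simp add: abs_less_iff)
  have "\<exists>T'\<ge>T. G T' < \<delta>/2"
  proof (rule ccontr)
    assume "\<not> ?thesis"
    then have "set_integrable lborel {a..} e"
      using \<open>a \<le> T\<close> \<open>0 < \<delta>\<close> \<rho>_le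
      by (intro set_integrable_if_dissipative_bounded_below[OF G_nonneg e_nonneg G_cont e_cont
            dissipation, of T "\<delta>/2" "\<delta>/2"]) (auto simp: not_less)
    with e_not_int show False ..
  qed
  then obtain T' where "T \<le> T'" "G T' < \<delta>/2" by blast
  show "\<forall>\<^sub>F t in at_top. dist (G t) 0 < \<delta>"
  proof (rule eventually_at_top_linorderI[of T'])
    fix t assume "T' \<le> t"
    have "0 \<le> integral {T'..t} (\<lambda>r. e r * G r)"
      using \<open>a \<le> T\<close> \<open>T \<le> T'\<close> \<open>T' \<le> t\<close> e_nonneg G_nonneg
      by (intro integral_nonneg integrable_continuous_interval continuous_intros
          continuous_on_subset[OF e_cont] continuous_on_subset[OF G_cont]) auto
    then show "dist (G t) 0 < \<delta>"
      using dissipation[of T' t] tail[of T' t] G_nonneg[of t] \<open>a \<le> T\<close> \<open>T \<le> T'\<close> \<open>T' \<le> t\<close>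
        \<open>G T' < \<delta>/2\<close> by (auto simp: dist_real_def)
  qed
qed

lemma bounded_image_atLeast_if_tendsto:
  fixes f :: "real \<Rightarrow> 'a::real_normed_vector"
  assumes cont: "continuous_on {a..} f" and lim: "(f \<longlongrightarrow> l) at_top"
  shows "bounded (f ` {a..})"
proof -
  obtain T where T: "\<And>t. T \<le> t \<Longrightarrow> dist (f t) l < 1"
    using tendstoD[OF lim, of 1] unfolding eventually_at_top_linorder by auto
  have "bounded (f ` {a..max a T})"
    by (intro compact_imp_bounded compact_continuous_image continuous_on_subset[OF cont]) auto
  moreover have "bounded (f ` {max a T..})"
    using T by (intro bounded_subset[OF bounded_ball[of l 1]]) (auto simp: dist_commute)
  moreover have "{a..} = {a..max a T} \<union> {max a T..}"
    by auto
  ultimately show ?thesis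
    by (metis bounded_Un image_Un)
qed

section \<open>Regularized monotone flows\<close>

locale regularized_monotone_flow =
  fixes T :: "'c::real_inner \<Rightarrow> 'c"
    and e e' :: "real \<Rightarrow> real" and t0 :: real and z z' :: "real \<Rightarrow> 'c"
  assumes monotone: "\<And>p q. 0 \<le> inner (T p - T q) (p - q)"
    and e_pos: "\<And>t. t0 \<le> t \<Longrightarrow> 0 < e t"
    and e_deriv: "\<And>t. t0 \<le> t \<Longrightarrow> (e has_real_derivative e' t) (at t within {t0..})"
    and e'_cont: "continuous_on {t0..} e'"
    and z_deriv: "\<And>t. t0 \<le> t \<Longrightarrow> (z has_vector_derivative z' t) (at t within {t0..})"
    and z'_cont: "continuous_on {t0..} z'"
    and flow: "\<And>t. t0 \<le> t \<Longrightarrow> z' t = - (T (z t) + e t *\<^sub>R z t)"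
begin

lemma e_cont: "continuous_on {t0..} e"
  by (rule DERIV_continuous_on[OF e_deriv]) simp

lemma dist_zero_squared_le:
  assumes "T zs = 0" and "t0 \<le> t"
  shows "norm (z t - zs)^2 \<le> max (norm (z t0 - zs)^2) (norm zs^2)"
proof (rule le_max_if_derivative_nonpos_above[OF _ _ \<open>t0 \<le> t\<close>])
  fix r assume "t0 \<le> r"
  have "((\<lambda>r. inner (z r - zs) (z r - zs)) has_vector_derivative 2 * inner (z' r) (z r - zs))
      (at r within {t0..})"
    using z_deriv[OF \<open>t0 \<le> r\<close>] by (intro has_vector_derivative_inner_self derivative_eq_intros) auto
  then show "((\<lambda>r. norm (z r - zs)^2) has_real_derivative 2 * inner (z' r) (z r - zs)) (at r within {t0..})"
    by (simp add: power2_norm_eq_inner has_real_derivative_iff_has_vector_derivative)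
  assume "norm zs^2 \<le> norm (z r - zs)^2"
  then have "norm zs \<le> norm (z r - zs)"
    by (rule power2_le_imp_le) simp
  then have "0 \<le> norm (z r - zs) * (norm (z r - zs) - norm zs)"
    by simp
  also have "\<dots> \<le> inner (z r - zs) (z r - zs) + inner zs (z r - zs)"
    using Cauchy_Schwarz_ineq2[of zs "z r - zs"]
    by (simp add: algebra_simps power2_norm_eq_inner[symmetric] power2_eq_square)
  also have "\<dots> = inner (z r) (z r - zs)"
    by (simp add: inner_diff_left)
  finally have "0 \<le> e r * inner (z r) (z r - zs)"
    using e_pos[OF \<open>t0 \<le> r\<close>] by simp
  moreover have "inner (z' r) (z r - zs) = - inner (T (z r) - T zs) (z r - zs) - e r * inner (z r) (z r - zs)"
    using \<open>T zs = 0\<close> by (simp add: flow[OF \<open>t0 \<le> r\<close>] inner_add_left inner_diff_left)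
  ultimately show "2 * inner (z' r) (z r - zs) \<le> 0"
    using monotone[of "z r" zs] by linarith
qed

lemma bounded_trajectory:
  assumes "T zs = 0"
  shows "bounded (z ` {t0..})"
proof -
  define M where "M = max (norm (z t0 - zs)^2) (norm zs^2)"
  have "norm (z t) \<le> norm zs + sqrt M" if "t0 \<le> t" for t
  proof -
    have "norm (z t - zs) \<le> sqrt M"
      unfolding M_def using dist_zero_squared_le[OF assms that] by (rule real_le_rsqrt)
    then show ?thesis
      using norm_triangle_sub[of "z t" zs] by linarith
  qed
  then show ?thesis
    unfolding bounded_iff by auto
qed

lemma velocity_difference_le:
  assumes bound: "\<And>t. t0 \<le> t \<Longrightarrow> norm (z t) \<le> C" and "t0 \<le> r" "t0 \<le> u"
  shows "inner (z' u - z' r) (z u - z r)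
    \<le> - e r * norm (z u - z r)^2 + C * \<bar>e u - e r\<bar> * norm (z u - z r)"
proof -
  define d where "d = z u - z r"
  have "z' u - z' r = - (T (z u) - T (z r)) - (e r *\<^sub>R d + (e u - e r) *\<^sub>R z u)"
    unfolding flow[OF \<open>t0 \<le> u\<close>] flow[OF \<open>t0 \<le> r\<close>] d_def by (simp add: algebra_simps)
  then have "inner (z' u - z' r) d
      = - inner (T (z u) - T (z r)) d - e r * norm d^2 - (e u - e r) * inner (z u) d"
    by (simp add: inner_diff_left inner_add_left power2_norm_eq_inner)
  moreover have "- ((e u - e r) * inner (z u) d) \<le> C * \<bar>e u - e r\<bar> * norm d"
  proof -
    have "\<bar>inner (z u) d\<bar> \<le> C * norm d"
      using Cauchy_Schwarz_ineq2[of "z u" d] bound[OF \<open>t0 \<le> u\<close>]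
      by (meson mult_right_mono norm_ge_zero order_trans)
    then have "\<bar>(e u - e r) * inner (z u) d\<bar> \<le> \<bar>e u - e r\<bar> * (C * norm d)"
      by (simp add: abs_mult mult_left_mono)
    then show ?thesis
      by (simp add: algebra_simps)
  qed
  ultimately have "inner (z' u - z' r) d \<le> - e r * norm d^2 + C * \<bar>e u - e r\<bar> * norm d"
    using monotone[of "z u" "z r"] unfolding d_def by linarith
  then show ?thesis
    unfolding d_def .
qed

lemma velocity_tendsto_zero_if_dominated:
  assumes bound: "\<And>t. t0 \<le> t \<Longrightarrow> norm (z t) \<le> C"
    and e_not_int: "\<not> set_integrable lborel {t0..} e"
    and \<rho>_int: "set_integrable lborel {t0..} \<rho>"
    and dominated: "\<And>t. t0 \<le> t \<Longrightarrow> 2 * C * \<bar>e' t\<bar> * norm (z' t) \<le> e t * norm (z' t)^2 + \<rho> t"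
  shows "((\<lambda>t. norm (z' t)) \<longlongrightarrow> 0) at_top"
proof -
  define G where "G t = norm (z' t)^2" for t
  have "(G \<longlongrightarrow> 0) at_top"
  proof (rule tendsto_zero_if_dissipative[OF _ _ _ e_cont e_not_int \<rho>_int])
    show "0 \<le> G t" for t
      unfolding G_def by simp
    show "0 \<le> e t" if "t0 \<le> t" for t
      using e_pos[OF that] by simp
    show "continuous_on {t0..} G"
      unfolding G_def by (intro continuous_intros z'_cont)
    fix s t assume st: "t0 \<le> s" "s \<le> t"
    have sub: "{s..t} \<subseteq> {t0..}"
      using st by auto
    have \<rho>_int': "\<rho> integrable_on {s..t}"
      using set_integrable_subset[OF \<rho>_int _ sub] by (auto intro: set_borel_integral_eq_integral(1))
    have eG_int: "(\<lambda>r. e r * G r) integrable_on {s..t}"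
      unfolding G_def
      by (intro integrable_continuous_interval continuous_on_subset[OF _ sub] continuous_intros
          e_cont z'_cont)
    have "G t - G s
        \<le> integral {s..t} (\<lambda>r. -2 * e r * norm (z' r)^2 + 2 * C * \<bar>e' r\<bar> * norm (z' r))"
      unfolding G_def
      by (rule derivative_energy_le[OF z_deriv z'_cont e_deriv e'_cont velocity_difference_le[OF bound] st])
    also have "\<dots> \<le> integral {s..t} (\<lambda>r. \<rho> r - e r * G r)"
    proof (rule integral_le)
      show "(\<lambda>r. -2 * e r * norm (z' r)^2 + 2 * C * \<bar>e' r\<bar> * norm (z' r)) integrable_on {s..t}"
        by (intro integrable_continuous_interval continuous_on_subset[OF _ sub] continuous_intros
            e_cont z'_cont e'_cont)
      show "(\<lambda>r. \<rho> r - e r * G r) integrable_on {s..t}"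
        by (intro integrable_diff \<rho>_int' eG_int)
      fix r assume "r \<in> {s..t}"
      then show "-2 * e r * norm (z' r)^2 + 2 * C * \<bar>e' r\<bar> * norm (z' r) \<le> \<rho> r - e r * G r"
        using dominated[of r] st unfolding G_def by auto
    qed
    also have "\<dots> = integral {s..t} \<rho> - integral {s..t} (\<lambda>r. e r * G r)"
      by (rule integral_diff[OF \<rho>_int' eG_int])
    finally show "G t \<le> G s - integral {s..t} (\<lambda>r. e r * G r) + integral {s..t} \<rho>"
      by simp
  qed
  then show ?thesis
    using tendsto_real_sqrt[of G 0] unfolding G_def by simp
qed

lemma bounded_velocity:
  assumes "bounded (z ` {t0..})" and "bounded (T ` z ` {t0..})" and "bounded (e ` {t0..})"
  shows "bounded (z' ` {t0..})"
proof -
  obtain C where C: "\<And>t. t0 \<le> t \<Longrightarrow> norm (z t) \<le> C"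
    using assms(1) unfolding bounded_iff by auto
  obtain K where K: "\<And>t. t0 \<le> t \<Longrightarrow> norm (T (z t)) \<le> K"
    using assms(2) unfolding bounded_iff by auto
  obtain E where E: "\<And>t. t0 \<le> t \<Longrightarrow> \<bar>e t\<bar> \<le> E"
    using assms(3) unfolding bounded_iff by auto
  have "norm (z' t) \<le> K + E * C" if "t0 \<le> t" for t
  proof -
    have "norm (z' t) \<le> norm (T (z t)) + \<bar>e t\<bar> * norm (z t)"
      unfolding flow[OF that] norm_minus_cancel
      using norm_triangle_ineq[of "T (z t)" "e t *\<^sub>R z t"] by simp
    also have "\<dots> \<le> K + E * C"
      using K[OF that] E[OF that] C[OF that] by (intro add_mono mult_mono) auto
    finally show ?thesis .
  qed
  then show ?thesis
    unfolding bounded_iff by auto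
qed

lemma velocity_tendsto_zero:
  assumes "T zs = 0" and T_bounded: "\<And>B. bounded B \<Longrightarrow> bounded (T ` B)"
    and e_lim: "(e \<longlongrightarrow> 0) at_top" and e_not_int: "\<not> set_integrable lborel {t0..} e"
    and e'_int: "set_integrable lborel {t0..} e' \<or> set_integrable lborel {t0..} (\<lambda>t. \<bar>e' t\<bar>^2 / e t)"
  shows "((\<lambda>t. norm (z' t)) \<longlongrightarrow> 0) at_top"
proof -
  have z_bdd: "bounded (z ` {t0..})"
    by (rule bounded_trajectory[OF \<open>T zs = 0\<close>])
  then obtain C where C: "\<And>t. t0 \<le> t \<Longrightarrow> norm (z t) \<le> C"
    unfolding bounded_iff by auto
  then have "0 \<le> C"
    using norm_ge_zero[of "z t0"] by (meson order_refl order_trans)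
  from e'_int show ?thesis
  proof
    assume int: "set_integrable lborel {t0..} e'"
    obtain N where N: "\<And>t. t0 \<le> t \<Longrightarrow> norm (z' t) \<le> N"
      using bounded_velocity[OF z_bdd T_bounded[OF z_bdd] bounded_image_atLeast_if_tendsto[OF e_cont e_lim]]
      unfolding bounded_iff by auto
    show ?thesis
    proof (rule velocity_tendsto_zero_if_dominated[OF C e_not_int])
      show "set_integrable lborel {t0..} (\<lambda>t. 2 * C * N * \<bar>e' t\<bar>)"
        by (intro set_integrable_mult_right set_integrable_abs int)
      fix t assume "t0 \<le> t"
      have "2 * C * \<bar>e' t\<bar> * norm (z' t) \<le> 2 * C * \<bar>e' t\<bar> * N"
        using N[OF \<open>t0 \<le> t\<close>] \<open>0 \<le> C\<close> by (intro mult_left_mono) auto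
      moreover have "0 \<le> e t * norm (z' t)^2"
        using e_pos[OF \<open>t0 \<le> t\<close>] by simp
      ultimately show "2 * C * \<bar>e' t\<bar> * norm (z' t) \<le> e t * norm (z' t)^2 + 2 * C * N * \<bar>e' t\<bar>"
        by (simp add: algebra_simps)
    qed
  next
    assume int: "set_integrable lborel {t0..} (\<lambda>t. \<bar>e' t\<bar>^2 / e t)"
    show ?thesis
    proof (rule velocity_tendsto_zero_if_dominated[OF C e_not_int])
      show "set_integrable lborel {t0..} (\<lambda>t. C^2 * (\<bar>e' t\<bar>^2 / e t))"
        by (intro set_integrable_mult_right int)
      fix t assume "t0 \<le> t"
      have "0 \<le> (e t * norm (z' t) - C * \<bar>e' t\<bar>)^2"
        by simp
      then have "2 * C * \<bar>e' t\<bar> * norm (z' t) * e t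
          \<le> (e t * norm (z' t)^2 + C^2 * (\<bar>e' t\<bar>^2 / e t)) * e t"
        using e_pos[OF \<open>t0 \<le> t\<close>] by (simp add: algebra_simps power2_eq_square)
      then show "2 * C * \<bar>e' t\<bar> * norm (z' t) \<le> e t * norm (z' t)^2 + C^2 * (\<bar>e' t\<bar>^2 / e t)"
        using e_pos[OF \<open>t0 \<le> t\<close>] by (rule mult_right_le_imp_le)
    qed
  qed
qed

lemma operator_gap_tendsto_zero:
  assumes "bounded (z ` {t0..})"
    and z'_lim: "((\<lambda>t. norm (z' t)) \<longlongrightarrow> 0) at_top" and e_lim: "(e \<longlongrightarrow> 0) at_top"
  shows "((\<lambda>t. norm (T (z t)) * norm (z t - zs)) \<longlongrightarrow> 0) at_top"
proof -
  obtain C where C: "\<And>t. t0 \<le> t \<Longrightarrow> norm (z t) \<le> C"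
    using assms(1) unfolding bounded_iff by auto
  show ?thesis
  proof (rule tendsto_0_le)
    show "((\<lambda>t. norm (z' t) + \<bar>e t\<bar> * C) \<longlongrightarrow> 0) at_top"
      using tendsto_add[OF z'_lim tendsto_mult_right[OF tendsto_rabs[OF e_lim], of C]] by simp
    show "\<forall>\<^sub>F t in at_top.
        norm (norm (T (z t)) * norm (z t - zs)) \<le> norm (norm (z' t) + \<bar>e t\<bar> * C) * (C + norm zs)"
      using eventually_ge_at_top[of t0]
    proof eventually_elim
      case (elim t)
      have "T (z t) = - z' t - e t *\<^sub>R z t"
        by (simp add: flow[OF elim])
      then have "norm (T (z t)) \<le> norm (z' t) + \<bar>e t\<bar> * norm (z t)"
        using norm_triangle_ineq4[of "- z' t" "e t *\<^sub>R z t"] by simp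
      also have "\<dots> \<le> norm (z' t) + \<bar>e t\<bar> * C"
        using C[OF elim] by (simp add: mult_left_mono)
      finally have "norm (T (z t)) \<le> norm (z' t) + \<bar>e t\<bar> * C" .
      moreover have "norm (z t - zs) \<le> C + norm zs"
        using C[OF elim] norm_triangle_ineq4[of "z t" zs] by linarith
      ultimately show ?case
        by (simp add: mult_mono)
    qed
  qed
qed

end

section \<open>The saddle-point operator of a linearly constrained convex problem\<close>

lemma convex_on_gradient_ineq:
  fixes f :: "'a::real_inner \<Rightarrow> real"
  assumes convex: "convex_on UNIV f" and grad: "(f has_derivative (\<lambda>h. inner g h)) (at z)"
  shows "f z + inner g (y - z) \<le> f y"
proof -
  define \<phi> where "\<phi> s = f (z + s *\<^sub>R (y - z))" for s :: real
  have "convex_on UNIV \<phi>"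
  proof (rule convex_onI)
    fix t a c :: real assume "0 < t" "t < 1"
    have "z + ((1 - t) * a + t * c) *\<^sub>R (y - z)
        = (1 - t) *\<^sub>R (z + a *\<^sub>R (y - z)) + t *\<^sub>R (z + c *\<^sub>R (y - z))"
      by (simp add: algebra_simps)
    then show "\<phi> ((1 - t) *\<^sub>R a + t *\<^sub>R c) \<le> (1 - t) * \<phi> a + t * \<phi> c"
      unfolding \<phi>_def using convex_onD[OF convex, of t] \<open>0 < t\<close> \<open>t < 1\<close> by simp
  qed simp
  moreover have "(\<phi> has_field_derivative inner g (y - z)) (at 0)"
  proof -
    have "((\<lambda>s. z + s *\<^sub>R (y - z)) has_derivative (\<lambda>s. s *\<^sub>R (y - z))) (at 0)"
      by (auto intro!: derivative_eq_intros)
    moreover have "(f has_derivative (\<lambda>h. inner g h)) (at ((\<lambda>s. z + s *\<^sub>R (y - z)) 0))"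
      using grad by simp
    ultimately have "(\<phi> has_derivative (\<lambda>s. inner g (s *\<^sub>R (y - z)))) (at 0)"
      unfolding \<phi>_def by (rule has_derivative_compose)
    then have "(\<phi> has_derivative (\<lambda>s. inner g (y - z) * s)) (at 0)"
      by (simp add: mult.commute)
    then show ?thesis
      unfolding has_field_derivative_def by simp
  qed
  ultimately have "inner g (y - z) * (1 - 0) \<le> \<phi> 1 - \<phi> 0"
    by (intro convex_on_imp_above_tangent) auto
  then show ?thesis
    unfolding \<phi>_def by simp
qed

lemma convex_on_gradient_monotone:
  fixes f :: "'a::real_inner \<Rightarrow> real"
  assumes "convex_on UNIV f" and "\<And>z. (f has_derivative (\<lambda>h. inner (gf z) h)) (at z)"
  shows "0 \<le> inner (gf u - gf v) (u - v)"
  using convex_on_gradient_ineq[OF assms(1,2), of u v] convex_on_gradient_ineq[OF assms(1,2), of v u]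
  by (simp add: inner_diff_left inner_diff_right)

lemma bounded_linear_adjoint:
  fixes A :: "'a::real_inner \<Rightarrow> 'b::real_inner"
  assumes A: "bounded_linear A" and adj: "\<And>u v. inner (A u) v = inner u (As v)"
  shows "bounded_linear As"
proof -
  obtain K where "0 < K" and K: "\<And>u. norm (A u) \<le> norm u * K"
    using bounded_linear.pos_bounded[OF A] by blast
  show ?thesis
  proof (rule bounded_linear_intro)
    show "As (v + w) = As v + As w" for v w
      using vector_eq_ldot[of "As (v + w)" "As v + As w"]
      by (simp add: adj[symmetric] inner_add_right)
    show "As (c *\<^sub>R v) = c *\<^sub>R As v" for c v
      using vector_eq_ldot[of "As (c *\<^sub>R v)" "c *\<^sub>R As v"]
      by (simp add: adj[symmetric])
    show "norm (As v) \<le> norm v * K" for v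
    proof (cases "As v = 0")
      case False
      have "norm (As v) * norm (As v) = inner (A (As v)) v"
        by (simp add: adj power2_norm_eq_inner[symmetric] power2_eq_square)
      also have "\<dots> \<le> norm (As v) * K * norm v"
        using norm_cauchy_schwarz[of "A (As v)" v] K[of "As v"] by (meson mult_right_mono norm_ge_zero order_trans)
      finally show ?thesis
        using False by (simp add: algebra_simps)
    qed (use \<open>0 < K\<close> in simp)
  qed
qed

lemma bounded_image_if_lipschitz_on:
  assumes "L-lipschitz_on B f" and "bounded B"
  shows "bounded (f ` B)"
proof (cases "B = {}")
  case False
  then obtain x0 where "x0 \<in> B" by blast
  then obtain R where R: "\<And>x. x \<in> B \<Longrightarrow> dist x0 x \<le> R"
    using \<open>bounded B\<close> unfolding bounded_any_center[of _ x0] by blast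
  have "dist (f x0) (f x) \<le> L * R" if "x \<in> B" for x
    using lipschitz_onD[OF assms(1) \<open>x0 \<in> B\<close> that] R[OF that] lipschitz_on_nonneg[OF assms(1)]
    by (meson mult_left_mono order_trans)
  then show ?thesis
    unfolding bounded_def by blast
qed simp

definition saddle_op :: "('a::real_inner \<Rightarrow> 'a) \<Rightarrow> ('a \<Rightarrow> 'b::real_inner) \<Rightarrow> ('b \<Rightarrow> 'a) \<Rightarrow> 'b
    \<Rightarrow> 'a \<times> 'b \<Rightarrow> 'a \<times> 'b" where
  "saddle_op gf A As b = (\<lambda>(x, l). (gf x + As l, b - A x))"

lemma saddle_op_eq_zero:
  assumes "A xb = b" and "gf xb + As lb = 0"
  shows "saddle_op gf A As b (xb, lb) = 0"
  using assms by (simp add: saddle_op_def zero_prod_def)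

lemma saddle_op_monotone:
  fixes f :: "'a::real_inner \<Rightarrow> real"
  assumes convex: "convex_on UNIV f" and grad: "\<And>z. (f has_derivative (\<lambda>h. inner (gf z) h)) (at z)"
    and A: "linear A" and adj: "\<And>u v. inner (A u) v = inner u (As v)"
  shows "0 \<le> inner (saddle_op gf A As b p - saddle_op gf A As b q) (p - q)"
proof -
  obtain x l x' l' where p: "p = (x, l)" and q: "q = (x', l')"
    by fastforce
  have "inner (As l - As l') (x - x') = inner (A x - A x') (l - l')"
    by (simp add: inner_diff_left inner_diff_right inner_commute adj[symmetric] linear_diff[OF A])
  then have "inner (saddle_op gf A As b p - saddle_op gf A As b q) (p - q) = inner (gf x - gf x') (x - x')"
    by (simp add: saddle_op_def p q inner_diff_left inner_diff_right inner_add_left algebra_simps)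
  then show ?thesis
    using convex_on_gradient_monotone[OF convex grad] by simp
qed

lemma bounded_saddle_op_image:
  assumes lip: "\<And>B. bounded B \<Longrightarrow> \<exists>K. K-lipschitz_on B gf" and A: "bounded_linear A"
    and adj: "\<And>u v. inner (A u) v = inner u (As v)" and "bounded B"
  shows "bounded (saddle_op gf A As b ` B)"
proof -
  have "bounded (gf ` fst ` B)"
    using lip[OF bounded_fst[OF \<open>bounded B\<close>]] bounded_fst[OF \<open>bounded B\<close>]
    by (auto intro: bounded_image_if_lipschitz_on)
  moreover have "bounded (As ` snd ` B)"
    by (rule bounded_linear_image[OF bounded_snd[OF \<open>bounded B\<close>] bounded_linear_adjoint[OF A adj]])
  ultimately have "bounded ((\<lambda>p. gf (fst p) + As (snd p)) ` B)"
    by (intro bounded_plus_comp) (simp_all add: image_image)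
  moreover have "bounded ((\<lambda>p. b - A (fst p)) ` B)"
  proof (rule bounded_minus_comp)
    show "bounded ((\<lambda>p. b) ` B)"
      by (rule bounded_subset[of "{b}"]) auto
    show "bounded ((\<lambda>p. A (fst p)) ` B)"
      using bounded_linear_image[OF bounded_fst[OF \<open>bounded B\<close>] A] by (simp add: image_image)
  qed
  ultimately have "bounded (((\<lambda>p. gf (fst p) + As (snd p)) ` B) \<times> ((\<lambda>p. b - A (fst p)) ` B))"
    by (rule bounded_Times)
  moreover have "saddle_op gf A As b ` B \<subseteq> ((\<lambda>p. gf (fst p) + As (snd p)) ` B) \<times> ((\<lambda>p. b - A (fst p)) ` B)"
    by (auto simp: saddle_op_def split_beta)
  ultimately show ?thesis
    by (rule bounded_subset)
qed

lemma abs_lagr_gap_le: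
  fixes f :: "'a::real_inner \<Rightarrow> real"
  assumes convex: "convex_on UNIV f" and grad: "\<And>z. (f has_derivative (\<lambda>h. inner (gf z) h)) (at z)"
    and A: "linear A" and adj: "\<And>u v. inner (A u) v = inner u (As v)"
    and "A xb = b" and "gf xb + As lb = 0"
  shows "\<bar>lagr f A b x lb - lagr f A b xb l\<bar>
    \<le> norm (saddle_op gf A As b (x, l)) * norm ((x, l) - (xb, lb))"
proof -
  have A_diff: "A (x - xb) = A x - b"
    using \<open>A xb = b\<close> by (simp add: linear_diff[OF A])
  have gap: "lagr f A b x lb - lagr f A b xb l = f x - f xb + inner lb (A x - b)"
    using \<open>A xb = b\<close> by (simp add: lagr_def)
  have "inner (As lb) (x - xb) = inner lb (A x - b)"
    by (metis A_diff adj inner_commute)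
  then have "inner (gf xb) (x - xb) = - inner lb (A x - b)"
    using \<open>gf xb + As lb = 0\<close> by (simp add: eq_neg_iff_add_eq_0[symmetric])
  then have lower: "0 \<le> lagr f A b x lb - lagr f A b xb l"
    using convex_on_gradient_ineq[OF convex grad, of xb x] gap by simp
  have "inner (As l) (x - xb) = inner l (A x - b)"
    by (metis A_diff adj inner_commute)
  then have "inner (saddle_op gf A As b (x, l)) ((x, l) - (xb, lb)) = inner (gf x) (x - xb) + inner lb (A x - b)"
    by (simp add: saddle_op_def inner_add_left inner_diff_left inner_diff_right inner_commute algebra_simps)
  then have "lagr f A b x lb - lagr f A b xb l \<le> inner (saddle_op gf A As b (x, l)) ((x, l) - (xb, lb))"
    using convex_on_gradient_ineq[OF convex grad, of x xb] gap by (simp add: inner_diff_right)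
  also have "\<dots> \<le> norm (saddle_op gf A As b (x, l)) * norm ((x, l) - (xb, lb))"
    by (rule norm_cauchy_schwarz)
  finally show ?thesis
    using lower by simp
qed

lemma regularized_monotone_flow_saddle_op:
  fixes f :: "'a::real_inner \<Rightarrow> real" and A :: "'a \<Rightarrow> 'b::real_inner"
  assumes f_convex: "convex_on UNIV f"
    and f_grad: "\<And>z. (f has_derivative (\<lambda>h. inner (gf z) h)) (at z)"
    and A_lin: "linear A" and As_adj: "\<And>u v. inner (A u) v = inner u (As v)"
    and eps_pos: "\<And>t. t \<ge> t0 \<Longrightarrow> eps t > 0"
    and eps_deriv: "\<And>t. t \<ge> t0 \<Longrightarrow> (eps has_real_derivative eps' t) (at t within {t0..})"
    and eps'_cont: "continuous_on {t0..} eps'"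
    and x_deriv: "\<And>t. t \<ge> t0 \<Longrightarrow> (x has_vector_derivative x' t) (at t within {t0..})"
    and lam_deriv: "\<And>t. t \<ge> t0 \<Longrightarrow> (lam has_vector_derivative lam' t) (at t within {t0..})"
    and x'_cont: "continuous_on {t0..} x'" and lam'_cont: "continuous_on {t0..} lam'"
    and eq1: "\<And>t. t \<ge> t0 \<Longrightarrow> x' t + gf (x t) + As (lam t) + eps t *\<^sub>R x t = 0"
    and eq2: "\<And>t. t \<ge> t0 \<Longrightarrow> lam' t + b - A (x t) + eps t *\<^sub>R lam t = 0"
  shows "regularized_monotone_flow (saddle_op gf A As b) eps eps' t0
    (\<lambda>t. (x t, lam t)) (\<lambda>t. (x' t, lam' t))"
proof
  show "0 \<le> inner (saddle_op gf A As b p - saddle_op gf A As b q) (p - q)" for p q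
    by (rule saddle_op_monotone[OF f_convex f_grad A_lin As_adj])
  show "((\<lambda>t. (x t, lam t)) has_vector_derivative (x' t, lam' t)) (at t within {t0..})" if "t0 \<le> t" for t
    using x_deriv[OF that] lam_deriv[OF that] by (rule has_vector_derivative_Pair)
  show "continuous_on {t0..} (\<lambda>t. (x' t, lam' t))"
    by (intro continuous_on_Pair x'_cont lam'_cont)
  show "(x' t, lam' t) = - (saddle_op gf A As b (x t, lam t) + eps t *\<^sub>R (x t, lam t))" if "t0 \<le> t" for t
    using eq1[OF that] eq2[OF that]
    by (simp add: saddle_op_def eq_neg_iff_add_eq_0 algebra_simps)
qed (use eps_pos eps_deriv eps'_cont in auto)

theorem theorem3p4:
  fixes f :: "'a::{real_inner, complete_space} \<Rightarrow> real"
    and gf :: "'a \<Rightarrow> 'a"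
    and A :: "'a \<Rightarrow> 'b::{real_inner, complete_space}"
    and As :: "'b \<Rightarrow> 'a"
    and b :: 'b
    and eps eps' :: "real \<Rightarrow> real"
    and t0 :: real
    and x x' :: "real \<Rightarrow> 'a"
    and lam lam' :: "real \<Rightarrow> 'b"
  assumes f_convex: "convex_on UNIV f"
    and f_grad: "\<And>z. (f has_derivative (\<lambda>h. inner (gf z) h)) (at z)"
    and gf_cont: "continuous_on UNIV gf"
    and gf_lip: "\<And>B. bounded B \<Longrightarrow> \<exists>K. K-lipschitz_on B gf"
    and A_lin: "bounded_linear A"
    and As_adj: "\<And>u v. inner (A u) v = inner u (As v)"
    and t0_nonneg: "t0 \<ge> 0"
    and eps_pos: "\<And>t. t \<ge> t0 \<Longrightarrow> eps t > 0"
    and eps_deriv: "\<And>t. t \<ge> t0 \<Longrightarrow> (eps has_real_derivative eps' t) (at t within {t0..})"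
    and eps'_cont: "continuous_on {t0..} eps'"
    and eps_lim: "(eps \<longlongrightarrow> 0) at_top"
    and SM_ne: "opt_sol f A b \<times> lag_mult f gf A As b \<noteq> {}"
    and x_deriv: "\<And>t. t \<ge> t0 \<Longrightarrow> (x has_vector_derivative x' t) (at t within {t0..})"
    and lam_deriv: "\<And>t. t \<ge> t0 \<Longrightarrow> (lam has_vector_derivative lam' t) (at t within {t0..})"
    and x'_cont: "continuous_on {t0..} x'"
    and lam'_cont: "continuous_on {t0..} lam'"
    and eq1: "\<And>t. t \<ge> t0 \<Longrightarrow> x' t + gf (x t) + As (lam t) + eps t *\<^sub>R x t = 0"
    and eq2: "\<And>t. t \<ge> t0 \<Longrightarrow> lam' t + b - A (x t) + eps t *\<^sub>R lam t = 0"
    and eps_not_L1: "\<not> set_integrable lborel {t0..} eps"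
    and eps'_cond: "set_integrable lborel {t0..} eps'
                    \<or> set_integrable lborel {t0..} (\<lambda>t. \<bar>eps' t\<bar>^2 / eps t)"
  shows "\<forall>(xb, lb) \<in> opt_sol f A b \<times> lag_mult f gf A As b.
           ((\<lambda>t. lagr f A b (x t) lb - lagr f A b xb (lam t)) \<longlongrightarrow> 0) at_top
         \<and> ((\<lambda>t. norm (x' t, lam' t)) \<longlongrightarrow> 0) at_top"
proof -
  have A: "linear A"
    using A_lin by (rule bounded_linear.linear)
  interpret regularized_monotone_flow "saddle_op gf A As b" eps eps' t0
    "\<lambda>t. (x t, lam t)" "\<lambda>t. (x' t, lam' t)"
    by (rule regularized_monotone_flow_saddle_op[OF f_convex f_grad A As_adj eps_pos eps_deriv
          eps'_cont x_deriv lam_deriv x'_cont lam'_cont eq1 eq2])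
  have "((\<lambda>t. lagr f A b (x t) lb - lagr f A b xb (lam t)) \<longlongrightarrow> 0) at_top
      \<and> ((\<lambda>t. norm (x' t, lam' t)) \<longlongrightarrow> 0) at_top"
    if "xb \<in> opt_sol f A b" "lb \<in> lag_mult f gf A As b" for xb lb
  proof -
    have "A xb = b" and "gf xb + As lb = 0"
      using that by (auto simp: opt_sol_def lag_mult_def)
    then have zero: "saddle_op gf A As b (xb, lb) = 0"
      by (rule saddle_op_eq_zero)
    have velocity: "((\<lambda>t. norm (x' t, lam' t)) \<longlongrightarrow> 0) at_top"
      using velocity_tendsto_zero[OF zero bounded_saddle_op_image[OF gf_lip A_lin As_adj]
          eps_lim eps_not_L1 eps'_cond] .
    have "((\<lambda>t. norm (saddle_op gf A As b (x t, lam t)) * norm ((x t, lam t) - (xb, lb))) \<longlongrightarrow> 0) at_top"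
      by (rule operator_gap_tendsto_zero[OF bounded_trajectory[OF zero] velocity eps_lim])
    then have "((\<lambda>t. lagr f A b (x t) lb - lagr f A b xb (lam t)) \<longlongrightarrow> 0) at_top"
      by (rule tendsto_0_le[where K=1])
        (use abs_lagr_gap_le[OF f_convex f_grad A As_adj \<open>A xb = b\<close> \<open>gf xb + As lb = 0\<close>]
          in \<open>auto intro: always_eventually\<close>)
    then show ?thesis
      using velocity ..
  qed
  then show ?thesis
    by blast
qed

end
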